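(* Let $\mathcal D\subseteq(0,1)$ and $f:\mathcal D\to(0,1)$. Then $f$ has a block simulation if and only if there exist an integer $k\ge0$ and integers $d_0,\dots,d_k,e_0,\dots,e_k$ with $0\le d_i\le e_i$ for all $i$ such that, writing $D(p)=\sum_{i=0}^k d_ip^i(1-p)^{k-i}$ and $E(p)=\sum_{i=0}^k e_ip^i(1-p)^{k-i}$, one has $E(p)\ne0$ and $f(p)=D(p)/E(p)$ for all $p\in\mathcal D$.
   Context: For $w\in\{0,1\}^*$ let $n_i(w)$ be the number of $i$'s in $w$; $\mathbf P_p[w]=p^{n_1(w)}(1-p)^{n_0(w)}$, $\mathbf P_p[L]=\sum_{w\in L}\mathbf P_p[w]$. A simulation of $f:\mathcal D\to[0,1]$ is a pair of disjoint languages $L_0,L_1\subseteq\{0,1\}^*$ with $L_0\cup L_1$ prefix-free such that $\mathbf P_p[L_0\cup L_1]=1$ and $\mathbf P_p[L_1]=f(p)$ for all $p\in\mathcal D$. A block simulation of $f$ is a simulation of the following form: for some $k\ge1$ and disjoint sets $A_0,A_1\subseteq\{0,1\}^k$, with $A'=\{0,1\}^k\setminus(A_0\cup A_1)$, one has $L_i=(A')^*A_i$, the set of concatenations $u_1\cdots u_mv$ with $m\ge0$, $u_j\in A'$, $v\in A_i$. *)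

theory Defs
  imports "HOL-Analysis.Analysis" "HOL-Library.Sublist"
begin

text \<open>Binary words are lists of booleans; True encodes the letter 1, False the letter 0.\<close>

definition nones :: "bool list \<Rightarrow> nat" where
  "nones w = length (filter (\<lambda>b. b) w)"

definition nzeros :: "bool list \<Rightarrow> nat" where
  "nzeros w = length (filter (\<lambda>b. \<not> b) w)"

definition Pw :: "real \<Rightarrow> bool list \<Rightarrow> real" where
  "Pw p w = p ^ nones w * (1 - p) ^ nzeros w"

definition PL :: "real \<Rightarrow> bool list set \<Rightarrow> real" where
  "PL p L = infsum (Pw p) L"

definition prefix_free :: "bool list set \<Rightarrow> bool" where
  "prefix_free L \<longleftrightarrow> (\<forall>u\<in>L. \<forall>v\<in>L. \<not> strict_prefix u v)"

definition is_simulation ::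
    "(real \<Rightarrow> real) \<Rightarrow> real set \<Rightarrow> bool list set \<Rightarrow> bool list set \<Rightarrow> bool" where
  "is_simulation f D L0 L1 \<longleftrightarrow>
     L0 \<inter> L1 = {} \<and> prefix_free (L0 \<union> L1) \<and>
     (\<forall>p\<in>D. PL p (L0 \<union> L1) = 1 \<and> PL p L1 = f p)"

definition block_lang :: "bool list set \<Rightarrow> bool list set \<Rightarrow> bool list set" where
  "block_lang A' A = {concat us @ v | us v. set us \<subseteq> A' \<and> v \<in> A}"

definition has_block_simulation :: "(real \<Rightarrow> real) \<Rightarrow> real set \<Rightarrow> bool" where
  "has_block_simulation f D \<longleftrightarrow>
     (\<exists>k::nat. \<exists>A0 A1. k \<ge> 1 \<and>
        A0 \<subseteq> {w. length w = k} \<and> A1 \<subseteq> {w. length w = k} \<and> A0 \<inter> A1 = {} \<and>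
        (let A' = {w. length w = k} - (A0 \<union> A1) in
          is_simulation f D (block_lang A' A0) (block_lang A' A1)))"

end

theory Submission
  imports Defs
begin

(* Reading a word of (A')^* A_i block by block, its weight is a product, so summing the geometric
   series over the number of rejected blocks gives P_p[L_1] = P(A_1) / P(A_0 \<union> A_1), where P(S) is
   the total weight of a set S of k-bit words. Grouping k-bit words by their number of ones turns
   P(S) into the sum of c_i p^i (1-p)^(k-i), where c_i counts the words of S with i ones; this yields
   D/E with 0 \<le> d_i \<le> e_i. Conversely, multiplying D and E by p^M (1-p)^M for large M moves all
   coefficients to indices j where they are at most (k + 2M choose j), so nested sets of words
   realising them exist. *)

abbreviation words :: "nat \<Rightarrow> bool list set" where
  "words n \<equiv> {w. length w = n}"

definition binary_form :: "nat \<Rightarrow> (nat \<Rightarrow> real) \<Rightarrow> real \<Rightarrow> real" where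
  "binary_form k c p = (\<Sum>i\<le>k. c i * p ^ i * (1 - p) ^ (k - i))"

lemma Pw_append: "Pw p (u @ v) = Pw p u * Pw p v"
  unfolding Pw_def nones_def nzeros_def by (simp add: power_add)

lemma Pw_nonneg: "0 \<le> p \<Longrightarrow> p \<le> 1 \<Longrightarrow> 0 \<le> Pw p w"
  unfolding Pw_def by simp

lemma Pw_pos: "0 < p \<Longrightarrow> p < 1 \<Longrightarrow> 0 < Pw p w"
  unfolding Pw_def by simp

lemma Pw_of_length:
  assumes "length w = n"
  shows "Pw p w = p ^ nones w * (1 - p) ^ (n - nones w)"
proof -
  have "nzeros w = n - nones w"
    unfolding nones_def nzeros_def using assms sum_length_filter_compl[of "\<lambda>b. b" w] by auto
  then show ?thesis
    by (simp add: Pw_def)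
qed

lemma words_with_nones_eq_shuffles:
  assumes "j \<le> n"
  shows "{w. length w = n \<and> nones w = j} = shuffles (replicate j True) (replicate (n - j) False)"
proof (intro set_eqI iffI)
  fix w assume w: "w \<in> {w. length w = n \<and> nones w = j}"
  have "w \<in> shuffles (filter (\<lambda>b. b) w) (filter Not w)"
    by (rule partition_in_shuffles)
  also have "filter (\<lambda>b. b) w = replicate j True"
    using w replicate_length_same[of "filter (\<lambda>b. b) w" True] by (simp add: nones_def)
  also have "filter Not w = replicate (n - j) False"
    using w sum_length_filter_compl[of "\<lambda>b. b" w] replicate_length_same[of "filter Not w" False]
    by (auto simp: nones_def)
  finally show "w \<in> shuffles (replicate j True) (replicate (n - j) False)" .
next
  fix w assume w: "w \<in> shuffles (replicate j True) (replicate (n - j) False)"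
  then have "filter (\<lambda>b. b) w \<in>
      shuffles (filter (\<lambda>b. b) (replicate j True)) (filter (\<lambda>b. b) (replicate (n - j) False))"
    unfolding filter_shuffles[symmetric] by blast
  then have "nones w = j" by (simp add: nones_def)
  then show "w \<in> {w. length w = n \<and> nones w = j}"
    using w assms by (simp add: length_shuffles)
qed

lemma card_words_with_nones:
  "j \<le> n \<Longrightarrow> card {w. length w = n \<and> nones w = j} = n choose j"
  by (subst words_with_nones_eq_shuffles, assumption, subst card_disjoint_shuffles) auto

lemma binomial_ge_self: "0 < j \<Longrightarrow> j < n \<Longrightarrow> n \<le> n choose j"
proof (induction n arbitrary: j)
  case (Suc n)
  then obtain i where j: "j = Suc i"
    using gr0_conv_Suc by blast
  show ?case
  proof (cases i)
    case (Suc i')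
    then have "n \<le> n choose i"
      using Suc.IH Suc.prems j by simp
    moreover have "0 < n choose j"
      using Suc.prems j by simp
    moreover have "Suc n choose j = (n choose i) + (n choose j)"
      using j by simp
    ultimately show ?thesis
      by linarith
  qed (use j in simp)
qed simp

lemma sum_Pw_eq_binary_form:
  assumes "A \<subseteq> words n"
  shows "sum (Pw p) A = binary_form n (\<lambda>i. card {w\<in>A. nones w = i}) p"
proof -
  have "finite A"
    using assms finite_list_length by (rule finite_subset)
  moreover have "nones ` A \<subseteq> {..n}"
    using assms by (auto simp: nones_def)
  ultimately have "sum (Pw p) A = (\<Sum>i\<le>n. \<Sum>w\<in>{w\<in>A. nones w = i}. Pw p w)"
    by (simp add: sum.group)
  also have "\<dots> = (\<Sum>i\<le>n. \<Sum>w\<in>{w\<in>A. nones w = i}. p ^ i * (1 - p) ^ (n - i))"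
    using assms by (intro sum.cong refl) (auto simp: Pw_of_length)
  finally show ?thesis
    by (simp add: binary_form_def mult.assoc)
qed

lemma sum_Pw_words: "sum (Pw p) (words n) = 1"
proof -
  have "sum (Pw p) (words n) = (\<Sum>i\<le>n. real (n choose i) * p ^ i * (1 - p) ^ (n - i))"
    unfolding sum_Pw_eq_binary_form[OF order_refl] binary_form_def
    by (intro sum.cong refl) (simp add: card_words_with_nones)
  also have "\<dots> = (p + (1 - p)) ^ n"
    by (rule binomial_ring[symmetric])
  finally show ?thesis
    by simp
qed

lemma binary_form_cong: "(\<And>i. i \<le> k \<Longrightarrow> c i = c' i) \<Longrightarrow> binary_form k c p = binary_form k c' p"
  unfolding binary_form_def by (intro sum.cong) auto

lemma binary_form_shift:
  "binary_form (k + 2 * M) (\<lambda>j. if M \<le> j \<and> j - M \<le> k then c (j - M) else 0) p =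
     p ^ M * (1 - p) ^ M * binary_form k c p"
proof -
  let ?c = "\<lambda>j. if M \<le> j \<and> j - M \<le> k then c (j - M) else 0"
  have "binary_form (k + 2 * M) ?c p = (\<Sum>j\<in>{0 + M..k + M}. ?c j * p ^ j * (1 - p) ^ (k + 2 * M - j))"
    unfolding binary_form_def by (rule sum.mono_neutral_right) auto
  also have "\<dots> = (\<Sum>i\<le>k. p ^ M * (1 - p) ^ M * (c i * p ^ i * (1 - p) ^ (k - i)))"
  proof (unfold sum.shift_bounds_cl_nat_ivl atLeast0AtMost, intro sum.cong refl)
    fix i assume "i \<in> {..k}"
    then have "i \<le> k" and exponent: "k + 2 * M - (i + M) = M + (k - i)"
      by auto
    then show "?c (i + M) * p ^ (i + M) * (1 - p) ^ (k + 2 * M - (i + M)) =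
        p ^ M * (1 - p) ^ M * (c i * p ^ i * (1 - p) ^ (k - i))"
      unfolding exponent power_add using \<open>i \<le> k\<close> by simp
  qed
  also have "\<dots> = p ^ M * (1 - p) ^ M * binary_form k c p"
    by (simp add: binary_form_def sum_distrib_left)
  finally show ?thesis .
qed

lemma has_sum_UN_disjoint_nonneg:
  fixes f :: "'a \<Rightarrow> real"
  assumes "\<And>i. i \<in> I \<Longrightarrow> (f has_sum s i) (B i)" and "(s has_sum S) I"
    and "\<And>x. x \<in> (\<Union>i\<in>I. B i) \<Longrightarrow> 0 \<le> f x" and "disjoint_family_on B I"
  shows "(f has_sum S) (\<Union>i\<in>I. B i)"
proof -
  have "f summable_on (\<Union>i\<in>I. B i)"
    using assms by (intro summable_on_UnionI[where g = s]) (auto dest: has_sum_imp_summable)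
  then obtain S' where S': "(f has_sum S') (\<Union>i\<in>I. B i)"
    unfolding summable_on_def by blast
  have "(\<Union>i\<in>I. B i) = snd ` Sigma I B"
    by force
  moreover have "inj_on snd (Sigma I B)"
    using assms(4) by (force simp: disjoint_family_on_def inj_on_def)
  ultimately have "((f \<circ> snd) has_sum S') (Sigma I B)"
    using S' by (simp add: has_sum_reindex)
  then have "(s has_sum S') I"
    by (rule has_sum_SigmaD) (use assms(1) in auto)
  then show ?thesis
    using S' assms(2) has_sum_unique by blast
qed

definition block_layer :: "bool list set \<Rightarrow> bool list set \<Rightarrow> nat \<Rightarrow> bool list set" where
  "block_layer A' A m = {concat us @ v | us v. set us \<subseteq> A' \<and> length us = m \<and> v \<in> A}"

lemma block_lang_eq_UN_block_layer: "block_lang A' A = (\<Union>m. block_layer A' A m)"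
  unfolding block_lang_def block_layer_def by blast

lemma block_layer_0 [simp]: "block_layer A' A 0 = A"
  unfolding block_layer_def by auto

lemma block_layer_Suc: "block_layer A' A (Suc m) = (\<lambda>(u, w). u @ w) ` (A' \<times> block_layer A' A m)"
proof (intro set_eqI iffI)
  fix x assume "x \<in> block_layer A' A (Suc m)"
  then obtain u us v where "x = u @ (concat us @ v)" "u \<in> A'" "set us \<subseteq> A'" "length us = m" "v \<in> A"
    unfolding block_layer_def by (auto simp: length_Suc_conv)
  then show "x \<in> (\<lambda>(u, w). u @ w) ` (A' \<times> block_layer A' A m)"
    unfolding block_layer_def by (auto intro!: image_eqI[where x="(u, concat us @ v)"])
next
  fix x assume "x \<in> (\<lambda>(u, w). u @ w) ` (A' \<times> block_layer A' A m)"
  then obtain u us v where "x = concat (u # us) @ v" "set (u # us) \<subseteq> A'" "length (u # us) = Suc m" "v \<in> A"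
    unfolding block_layer_def by auto
  then show "x \<in> block_layer A' A (Suc m)"
    unfolding block_layer_def by (intro CollectI exI conjI)
qed

lemma block_layer_subset_words:
  assumes "A' \<subseteq> words n" "A \<subseteq> words n"
  shows "block_layer A' A m \<subseteq> words (Suc m * n)"
proof (induction m)
  case (Suc m)
  show ?case
  proof
    fix x assume "x \<in> block_layer A' A (Suc m)"
    then obtain u w where "x = u @ w" "u \<in> A'" "w \<in> block_layer A' A m"
      by (auto simp: block_layer_Suc)
    moreover have "length u = n"
      using \<open>u \<in> A'\<close> assms(1) by auto
    moreover have "length w = Suc m * n"
      using \<open>w \<in> block_layer A' A m\<close> Suc.IH by auto
    ultimately show "x \<in> words (Suc (Suc m) * n)"
      by simp
  qed
qed (use assms in simp)

lemma finite_block_layer: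
  assumes "A' \<subseteq> words n" "A \<subseteq> words n"
  shows "finite (block_layer A' A m)"
  using block_layer_subset_words[OF assms] finite_list_length by (rule finite_subset)

lemma sum_Pw_block_layer:
  assumes "A' \<subseteq> words n" "A \<subseteq> words n"
  shows "sum (Pw p) (block_layer A' A m) = sum (Pw p) A' ^ m * sum (Pw p) A"
proof (induction m)
  case (Suc m)
  have "inj_on (\<lambda>(u, w). u @ w) (A' \<times> block_layer A' A m)"
  proof (rule inj_onI, clarify)
    fix u w u' w' assume "u \<in> A'" "u' \<in> A'" "u @ w = u' @ w'"
    moreover have "length u = length u'"
      using \<open>u \<in> A'\<close> \<open>u' \<in> A'\<close> assms(1) by auto
    ultimately show "u = u' \<and> w = w'"
      by simp
  qed
  then have "sum (Pw p) (block_layer A' A (Suc m)) = (\<Sum>(u, w)\<in>A' \<times> block_layer A' A m. Pw p u * Pw p w)"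
    by (simp add: block_layer_Suc sum.reindex case_prod_unfold Pw_append)
  also have "\<dots> = sum (Pw p) A' * sum (Pw p) (block_layer A' A m)"
    by (simp add: sum_product sum.cartesian_product)
  finally show ?case
    using Suc.IH by simp
qed simp

lemma has_sum_Pw_block_lang:
  assumes "A' \<subseteq> words n" "A \<subseteq> words n" "0 < n" "0 \<le> p" "p \<le> 1" "sum (Pw p) A' < 1"
  shows "(Pw p has_sum sum (Pw p) A / (1 - sum (Pw p) A')) (block_lang A' A)"
proof -
  define a b where "a = sum (Pw p) A" and "b = sum (Pw p) A'"
  have "0 \<le> b"
    unfolding b_def using assms by (simp add: sum_nonneg Pw_nonneg)
  then have "(\<lambda>m. b ^ m * a) sums (1 / (1 - b) * a)"
    using assms(6) by (intro sums_mult2 geometric_sums) (simp add: b_def)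
  moreover have "0 \<le> a"
    unfolding a_def using assms by (simp add: sum_nonneg Pw_nonneg)
  ultimately have "((\<lambda>m. b ^ m * a) has_sum a / (1 - b)) UNIV"
    using \<open>0 \<le> b\<close> by (intro sums_nonneg_imp_has_sum) auto
  moreover have "(Pw p has_sum b ^ m * a) (block_layer A' A m)" for m
    unfolding a_def b_def sum_Pw_block_layer[OF assms(1,2), symmetric]
    by (intro has_sum_finite finite_block_layer[OF assms(1,2)])
  moreover have "disjoint_family (block_layer A' A)"
  proof (unfold disjoint_family_on_def, intro ballI impI)
    fix i j :: nat assume "i \<noteq> j"
    then have "Suc i * n \<noteq> Suc j * n"
      using \<open>0 < n\<close> by simp
    then show "block_layer A' A i \<inter> block_layer A' A j = {}"
      using block_layer_subset_words[OF assms(1,2), of i] block_layer_subset_words[OF assms(1,2), of j]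
      by fastforce
  qed
  ultimately have "(Pw p has_sum a / (1 - b)) (\<Union>m. block_layer A' A m)"
    using assms by (intro has_sum_UN_disjoint_nonneg) (auto simp: Pw_nonneg)
  then show ?thesis
    by (simp add: a_def b_def block_lang_eq_UN_block_layer)
qed

lemma PL_block_lang:
  assumes "A \<subseteq> B" "B \<subseteq> words n" "0 < n" "0 \<le> p" "p \<le> 1" "0 < sum (Pw p) B"
  shows "PL p (block_lang (words n - B) A) = sum (Pw p) A / sum (Pw p) B"
proof -
  have "sum (Pw p) (words n - B) = 1 - sum (Pw p) B"
    using assms(2) by (simp add: sum_diff finite_list_length sum_Pw_words)
  moreover have "(Pw p has_sum sum (Pw p) A / (1 - sum (Pw p) (words n - B))) (block_lang (words n - B) A)"
    using assms calculation by (intro has_sum_Pw_block_lang) auto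
  ultimately show ?thesis
    unfolding PL_def by (simp add: infsumI)
qed

lemma prefix_append_same_length:
  assumes "length x = length y" "prefix (x @ X) (y @ Y)"
  shows "x = y \<and> prefix X Y"
proof -
  obtain z where "y @ Y = x @ X @ z"
    using assms(2) unfolding prefix_def by auto
  then show ?thesis
    using assms(1) by (auto simp: append_eq_append_conv)
qed

lemma block_prefix_unique:
  assumes "A' \<subseteq> words n" "B \<subseteq> words n" "A' \<inter> B = {}"
  shows "set us \<subseteq> A' \<Longrightarrow> set us' \<subseteq> A' \<Longrightarrow> v \<in> B \<Longrightarrow> v' \<in> B \<Longrightarrow>
    prefix (concat us @ v) (concat us' @ v') \<Longrightarrow> us = us' \<and> v = v'"
proof (induction us arbitrary: us')
  case Nil
  show ?case
  proof (cases us')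
    case (Cons u' r')
    then have "v = u'"
      using Nil.prems assms prefix_append_same_length[of v u' "[]" "concat r' @ v'"] by auto
    then show ?thesis
      using Nil.prems Cons assms(3) by auto
  qed (use Nil.prems assms prefix_append_same_length[of v v' "[]" "[]"] in auto)
next
  case (Cons u r)
  show ?case
  proof (cases us')
    case Nil
    then have "u = v'"
      using Cons.prems assms prefix_append_same_length[of u v' "concat r @ v" "[]"] by auto
    then show ?thesis
      using Cons.prems Nil assms(3) by auto
  next
    case (Cons u' r')
    then have "u = u'" "prefix (concat r @ v) (concat r' @ v')"
      using Cons.prems assms prefix_append_same_length[of u u' "concat r @ v" "concat r' @ v'"] by auto
    then show ?thesis
      using Cons.IH[of r'] Cons.prems Cons by auto
  qed
qed

lemma block_lang_Un: "block_lang A' (A0 \<union> A1) = block_lang A' A0 \<union> block_lang A' A1"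
  unfolding block_lang_def by blast

lemma block_lang_disjoint:
  assumes "A' \<subseteq> words n" "A0 \<union> A1 \<subseteq> words n" "A' \<inter> (A0 \<union> A1) = {}" "A0 \<inter> A1 = {}"
  shows "block_lang A' A0 \<inter> block_lang A' A1 = {}"
proof (rule ccontr)
  assume "block_lang A' A0 \<inter> block_lang A' A1 \<noteq> {}"
  then obtain us v us' v' where "set us \<subseteq> A'" "v \<in> A0" "set us' \<subseteq> A'" "v' \<in> A1"
    "concat us @ v = concat us' @ v'"
    unfolding block_lang_def by blast
  then have "v = v'"
    using block_prefix_unique[OF assms(1-3), of us us' v v'] by auto
  then show False
    using \<open>v \<in> A0\<close> \<open>v' \<in> A1\<close> assms(4) by auto
qed

lemma prefix_free_block_lang:
  assumes "A' \<subseteq> words n" "B \<subseteq> words n" "A' \<inter> B = {}"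
  shows "prefix_free (block_lang A' B)"
  unfolding prefix_free_def
proof (intro ballI notI)
  fix x y assume "x \<in> block_lang A' B" "y \<in> block_lang A' B" "strict_prefix x y"
  then obtain us v us' v' where "set us \<subseteq> A'" "v \<in> B" "set us' \<subseteq> A'" "v' \<in> B"
    "x = concat us @ v" "y = concat us' @ v'"
    unfolding block_lang_def by blast
  then have "x = y"
    using block_prefix_unique[OF assms, of us us' v v'] \<open>strict_prefix x y\<close>
    by (auto simp: strict_prefix_def)
  then show False
    using \<open>strict_prefix x y\<close> by simp
qed

lemma is_simulation_block_lang_iff:
  assumes "0 < n" "A \<subseteq> B" "B \<subseteq> words n" "D \<subseteq> {0<..<1}" "\<forall>p\<in>D. 0 < sum (Pw p) B"
  shows "is_simulation f D (block_lang (words n - B) (B - A)) (block_lang (words n - B) A) \<longleftrightarrow>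
    (\<forall>p\<in>D. f p = sum (Pw p) A / sum (Pw p) B)"
proof -
  have B: "B - A \<union> A = B"
    using \<open>A \<subseteq> B\<close> by blast
  have "block_lang (words n - B) (B - A) \<inter> block_lang (words n - B) A = {}"
    using assms(2,3) by (intro block_lang_disjoint[where n = n]) auto
  moreover have "prefix_free (block_lang (words n - B) (B - A) \<union> block_lang (words n - B) A)"
    unfolding block_lang_Un[symmetric] B using assms(3) by (intro prefix_free_block_lang) auto
  moreover have "PL p (block_lang (words n - B) (B - A) \<union> block_lang (words n - B) A) = 1"
    and "PL p (block_lang (words n - B) A) = sum (Pw p) A / sum (Pw p) B" if "p \<in> D" for p
  proof -
    have "0 \<le> p" "p \<le> 1" "0 < sum (Pw p) B"
      using that assms(4,5) by auto
    then show "PL p (block_lang (words n - B) (B - A) \<union> block_lang (words n - B) A) = 1"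
      and "PL p (block_lang (words n - B) A) = sum (Pw p) A / sum (Pw p) B"
      unfolding block_lang_Un[symmetric] B using assms(1-3) by (simp_all add: PL_block_lang)
  qed
  ultimately show ?thesis
    unfolding is_simulation_def by auto
qed

definition word_weight_ratio :: "(real \<Rightarrow> real) \<Rightarrow> real set \<Rightarrow> bool" where
  "word_weight_ratio f D \<longleftrightarrow> (\<exists>n>0. \<exists>A B. A \<subseteq> B \<and> B \<subseteq> words n \<and>
     (\<forall>p\<in>D. sum (Pw p) B \<noteq> 0 \<and> f p = sum (Pw p) A / sum (Pw p) B))"

lemma has_block_simulation_iff_word_weight_ratio:
  assumes "D \<subseteq> {0<..<1}" "\<forall>p\<in>D. 0 < f p"
  shows "has_block_simulation f D \<longleftrightarrow> word_weight_ratio f D"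
proof
  assume "has_block_simulation f D"
  then obtain n A0 A1 where "1 \<le> n" "A0 \<subseteq> words n" "A1 \<subseteq> words n" "A0 \<inter> A1 = {}"
    and sim: "is_simulation f D (block_lang (words n - (A0 \<union> A1)) A0) (block_lang (words n - (A0 \<union> A1)) A1)"
    unfolding has_block_simulation_def Let_def by blast
  then have "0 < n"
    by simp
  have pos: "\<forall>p\<in>D. 0 < sum (Pw p) (A0 \<union> A1)"
  proof
    fix p assume "p \<in> D"
    have "PL p (block_lang (words n - (A0 \<union> A1)) A1) = f p"
      using sim \<open>p \<in> D\<close> unfolding is_simulation_def by blast
    then have "A1 \<noteq> {}"
      using assms(2) \<open>p \<in> D\<close> by (force simp: PL_def block_lang_def)
    moreover have "finite (A0 \<union> A1)"
      using \<open>A0 \<subseteq> words n\<close> \<open>A1 \<subseteq> words n\<close>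
      by (intro finite_subset[OF _ finite_list_length[of n]]) auto
    moreover have "0 < p" "p < 1"
      using \<open>p \<in> D\<close> assms(1) by auto
    ultimately show "0 < sum (Pw p) (A0 \<union> A1)"
      by (intro sum_pos) (auto simp: Pw_pos)
  qed
  have "A0 \<union> A1 - A1 = A0"
    using \<open>A0 \<inter> A1 = {}\<close> by blast
  then have "\<forall>p\<in>D. f p = sum (Pw p) A1 / sum (Pw p) (A0 \<union> A1)"
    using is_simulation_block_lang_iff[of n A1 "A0 \<union> A1" D f] sim pos \<open>0 < n\<close> \<open>A0 \<subseteq> words n\<close>
      \<open>A1 \<subseteq> words n\<close> assms(1) by auto
  with pos have "\<forall>p\<in>D. sum (Pw p) (A0 \<union> A1) \<noteq> 0 \<and> f p = sum (Pw p) A1 / sum (Pw p) (A0 \<union> A1)"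
    by auto
  moreover have "A1 \<subseteq> A0 \<union> A1" "A0 \<union> A1 \<subseteq> words n"
    using \<open>A0 \<subseteq> words n\<close> \<open>A1 \<subseteq> words n\<close> by auto
  ultimately show "word_weight_ratio f D"
    unfolding word_weight_ratio_def using \<open>0 < n\<close> by blast
next
  assume "word_weight_ratio f D"
  then obtain n A B where "0 < n" "A \<subseteq> B" "B \<subseteq> words n"
    and ratio: "\<forall>p\<in>D. sum (Pw p) B \<noteq> 0 \<and> f p = sum (Pw p) A / sum (Pw p) B"
    unfolding word_weight_ratio_def by blast
  have "\<forall>p\<in>D. 0 < sum (Pw p) B"
    using ratio assms(1) by (force intro: order.not_eq_order_implies_strict sum_nonneg Pw_nonneg)
  then have "is_simulation f D (block_lang (words n - (B - A \<union> A)) (B - A))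
      (block_lang (words n - (B - A \<union> A)) A)"
    using is_simulation_block_lang_iff[OF \<open>0 < n\<close> \<open>A \<subseteq> B\<close> \<open>B \<subseteq> words n\<close> assms(1)] ratio
      Un_absorb2[OF \<open>A \<subseteq> B\<close>] by (simp add: Un_commute)
  moreover have "1 \<le> n" "B - A \<subseteq> words n" "A \<subseteq> words n" "(B - A) \<inter> A = {}"
    using \<open>0 < n\<close> \<open>A \<subseteq> B\<close> \<open>B \<subseteq> words n\<close> by auto
  ultimately show "has_block_simulation f D"
    unfolding has_block_simulation_def Let_def by blast
qed

lemma nested_subsets_with_card:
  assumes "\<And>j. j \<in> J \<Longrightarrow> a j \<le> b j" "\<And>j. j \<in> J \<Longrightarrow> b j \<le> card (X j)"
  obtains S T where "\<And>j. j \<in> J \<Longrightarrow> S j \<subseteq> X j \<and> T j \<subseteq> S j \<and> card (S j) = b j \<and> card (T j) = a j"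
proof -
  have "\<exists>S. S \<subseteq> X j \<and> card S = b j" if "j \<in> J" for j
    using obtain_subset_with_card_n[OF assms(2)[OF that]] by metis
  then obtain S where S: "\<And>j. j \<in> J \<Longrightarrow> S j \<subseteq> X j \<and> card (S j) = b j"
    by metis
  have "\<exists>T. T \<subseteq> S j \<and> card T = a j" if "j \<in> J" for j
    using obtain_subset_with_card_n[of "a j" "S j"] S[OF that] assms(1)[OF that] by metis
  then obtain T where "\<And>j. j \<in> J \<Longrightarrow> T j \<subseteq> S j \<and> card (T j) = a j"
    by metis
  with S that show thesis
    by blast
qed

lemma binary_forms_realised_by_words:
  fixes d e :: "nat \<Rightarrow> int"
  assumes "\<forall>i\<le>k. 0 \<le> d i \<and> d i \<le> e i"
  obtains n A B M where "0 < n" "A \<subseteq> B" "B \<subseteq> words n"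
    "\<And>p. sum (Pw p) A = p ^ M * (1 - p) ^ M * binary_form k (\<lambda>i. of_int (d i)) p"
    "\<And>p. sum (Pw p) B = p ^ M * (1 - p) ^ M * binary_form k (\<lambda>i. of_int (e i)) p"
proof -
  (* M exceeds every e_i, and n choose j \<ge> n > M for the shifted indices M \<le> j \<le> M + k. *)
  define M where "M = Suc (\<Sum>i\<le>k. nat (e i))"
  define n where "n = k + 2 * M"
  define shift where "shift c j = (if M \<le> j \<and> j - M \<le> k then nat (c (j - M)) else 0)"
    for c :: "nat \<Rightarrow> int" and j
  have shift_bound: "shift e j \<le> card {w. length w = n \<and> nones w = j}" if "j \<in> {..n}" for j
  proof (cases "M \<le> j \<and> j - M \<le> k")
    case True
    then have "nat (e (j - M)) \<le> (\<Sum>i\<le>k. nat (e i))"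
      by (intro member_le_sum) auto
    also have "\<dots> < M"
      unfolding M_def by simp
    also have "M < n"
      unfolding n_def M_def by simp
    also have "n \<le> n choose j"
      using True unfolding n_def M_def by (intro binomial_ge_self) auto
    finally show ?thesis
      using that True by (simp add: shift_def card_words_with_nones)
  next
    case False
    then show ?thesis
      by (auto simp: shift_def)
  qed
  have shift_mono: "shift d j \<le> shift e j" for j
    using assms by (simp add: shift_def nat_mono)
  obtain S T where ST: "\<And>j. j \<in> {..n} \<Longrightarrow> S j \<subseteq> {w. length w = n \<and> nones w = j} \<and>
      T j \<subseteq> S j \<and> card (S j) = shift e j \<and> card (T j) = shift d j"
  proof (rule nested_subsets_with_card)
    show "shift d j \<le> shift e j" for j
      by (rule shift_mono)
    show "shift e j \<le> card {w. length w = n \<and> nones w = j}" if "j \<in> {..n}" for j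
      using that by (rule shift_bound)
  qed (rule that)
  define A B where "A = (\<Union>j\<le>n. T j)" and "B = (\<Union>j\<le>n. S j)"
  have "A \<subseteq> B" "B \<subseteq> words n"
    unfolding A_def B_def using ST by blast+
  then have "A \<subseteq> words n"
    by (rule order.trans)
  have "{w\<in>A. nones w = j} = T j" "{w\<in>B. nones w = j} = S j" if "j \<le> n" for j
    unfolding A_def B_def using ST that by blast+
  then have counts: "binary_form n (\<lambda>j. card {w\<in>A. nones w = j}) p = binary_form n (\<lambda>j. shift d j) p"
      "binary_form n (\<lambda>j. card {w\<in>B. nones w = j}) p = binary_form n (\<lambda>j. shift e j) p" for p
    using ST by (auto intro: binary_form_cong)
  have padded: "binary_form n (\<lambda>j. shift c j) p = p ^ M * (1 - p) ^ M * binary_form k (\<lambda>i. of_int (c i)) p"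
    if "\<forall>i\<le>k. 0 \<le> c i" for c p
    unfolding n_def binary_form_shift[symmetric] using that
    by (intro binary_form_cong) (auto simp: shift_def)
  have "\<forall>i\<le>k. 0 \<le> d i" "\<forall>i\<le>k. 0 \<le> e i"
    using assms by force+
  note padded = this[THEN padded]
  show thesis
  proof (rule that)
    show "0 < n"
      unfolding n_def M_def by simp
    show "A \<subseteq> B" "B \<subseteq> words n"
      by fact+
    show "sum (Pw p) A = p ^ M * (1 - p) ^ M * binary_form k (\<lambda>i. of_int (d i)) p" for p
      unfolding sum_Pw_eq_binary_form[OF \<open>A \<subseteq> words n\<close>] counts padded ..
    show "sum (Pw p) B = p ^ M * (1 - p) ^ M * binary_form k (\<lambda>i. of_int (e i)) p" for p
      unfolding sum_Pw_eq_binary_form[OF \<open>B \<subseteq> words n\<close>] counts padded ..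
  qed
qed

definition binary_form_ratio :: "(real \<Rightarrow> real) \<Rightarrow> real set \<Rightarrow> bool" where
  "binary_form_ratio f D \<longleftrightarrow> (\<exists>k. \<exists>d e :: nat \<Rightarrow> int. (\<forall>i\<le>k. 0 \<le> d i \<and> d i \<le> e i) \<and>
     (\<forall>p\<in>D. binary_form k (\<lambda>i. of_int (e i)) p \<noteq> 0 \<and>
        f p = binary_form k (\<lambda>i. of_int (d i)) p / binary_form k (\<lambda>i. of_int (e i)) p))"

lemma word_weight_ratio_iff_binary_form_ratio:
  assumes "D \<subseteq> {0<..<1}"
  shows "word_weight_ratio f D \<longleftrightarrow> binary_form_ratio f D"
proof
  assume "word_weight_ratio f D"
  then obtain n A B where "A \<subseteq> B" "B \<subseteq> words n"
    and ratio: "\<forall>p\<in>D. sum (Pw p) B \<noteq> 0 \<and> f p = sum (Pw p) A / sum (Pw p) B"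
    unfolding word_weight_ratio_def by blast
  define d e where "d i = int (card {w\<in>A. nones w = i})" and "e i = int (card {w\<in>B. nones w = i})"
    for i
  have "finite B"
    using \<open>B \<subseteq> words n\<close> finite_list_length by (rule finite_subset)
  then have "\<forall>i\<le>n. 0 \<le> d i \<and> d i \<le> e i"
    using \<open>A \<subseteq> B\<close> by (auto simp: d_def e_def intro: card_mono)
  moreover have "sum (Pw p) A = binary_form n (\<lambda>i. of_int (d i)) p"
    "sum (Pw p) B = binary_form n (\<lambda>i. of_int (e i)) p" for p
    using \<open>A \<subseteq> B\<close> \<open>B \<subseteq> words n\<close> by (simp_all add: d_def e_def sum_Pw_eq_binary_form)
  ultimately show "binary_form_ratio f D"
    unfolding binary_form_ratio_def using ratio by metis
next
  assume "binary_form_ratio f D"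
  then obtain k and d e :: "nat \<Rightarrow> int" where de: "\<forall>i\<le>k. 0 \<le> d i \<and> d i \<le> e i"
    and ratio: "\<forall>p\<in>D. binary_form k (\<lambda>i. of_int (e i)) p \<noteq> 0 \<and>
          f p = binary_form k (\<lambda>i. of_int (d i)) p / binary_form k (\<lambda>i. of_int (e i)) p"
    unfolding binary_form_ratio_def by blast
  obtain n A B M where "0 < n" "A \<subseteq> B" "B \<subseteq> words n"
    and sum_A: "\<And>p. sum (Pw p) A = p ^ M * (1 - p) ^ M * binary_form k (\<lambda>i. of_int (d i)) p"
    and sum_B: "\<And>p. sum (Pw p) B = p ^ M * (1 - p) ^ M * binary_form k (\<lambda>i. of_int (e i)) p"
    by (rule binary_forms_realised_by_words[OF de]) (rule that)
  have "sum (Pw p) B \<noteq> 0 \<and> f p = sum (Pw p) A / sum (Pw p) B" if "p \<in> D" for p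
  proof -
    have "0 < p" "p < 1"
      using that assms by auto
    then show ?thesis
      using ratio that by (simp add: sum_A sum_B)
  qed
  then show "word_weight_ratio f D"
    unfolding word_weight_ratio_def using \<open>0 < n\<close> \<open>A \<subseteq> B\<close> \<open>B \<subseteq> words n\<close> by blast
qed

theorem proposition2p5:
  fixes f :: "real \<Rightarrow> real" and D :: "real set"
  assumes "D \<subseteq> {0<..<1}" and "\<forall>p\<in>D. f p \<in> {0<..<1}"
  shows "has_block_simulation f D \<longleftrightarrow>
    (\<exists>k::nat. \<exists>d e :: nat \<Rightarrow> int.
       (\<forall>i\<le>k. 0 \<le> d i \<and> d i \<le> e i) \<and>
       (\<forall>p\<in>D. (\<Sum>i\<le>k. of_int (e i) * p ^ i * (1 - p) ^ (k - i)) \<noteq> 0 \<and>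
               f p = (\<Sum>i\<le>k. of_int (d i) * p ^ i * (1 - p) ^ (k - i)) /
                     (\<Sum>i\<le>k. of_int (e i) * p ^ i * (1 - p) ^ (k - i))))"
proof -
  have pos: "\<forall>p\<in>D. 0 < f p"
    using assms(2) by auto
  show ?thesis
    unfolding has_block_simulation_iff_word_weight_ratio[OF assms(1) pos]
      word_weight_ratio_iff_binary_form_ratio[OF assms(1)] binary_form_ratio_def binary_form_def ..
qed

end
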